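(* In the ALOHA network described below, the transmit probability $p_{\mathrm{opt}}\in(0,1)$ that minimizes the mean local delay $\widetilde{D}(p)$ satisfies $$p_{\mathrm{opt}}\in\left(\frac{1}{\lambda c_d r_0^d\theta^{\delta}C(\delta)+2},\ \frac{1}{\lambda c_d r_0^d\theta^{\delta}C(\delta)}\right).$$
   Context: Model: transmitters form a homogeneous Poisson point process $\Phi$ of intensity $\lambda>0$ in $\mathbb{R}^d$; the typical receiver is at the origin and its desired transmitter $x_0\in\Phi$ is at distance $r_0>0$; probabilities are under the Palm distribution at $x_0$. Time is slotted. Path loss $\kappa r^{-\alpha}$ with $\alpha>d$, $\delta=d/\alpha\in(0,1)$. Power fading coefficients $h_{k,x}$ are i.i.d. exponential with mean $1$ over transmitters and slots, independent of everything. Unit power, always backlogged transmitters. Bandwidth $W$, noise power spectral density $N_r$, $N_0=N_r/\kappa$, SINR threshold $\theta>0$. $c_d$ is the volume of the unit ball in $\mathbb{R}^d$, $C(\delta)=\Gamma(1+\delta)\Gamma(1-\delta)=\frac{\pi\delta}{\sin(\pi\delta)}$. ALOHA with transmit probability $p$: each transmitter (including $x_0$) is independently active in each slot with probability $p$, independently over transmitters and slots; $\Phi_k$ is the active set in slot $k$; $\mathrm{SINR}_k=\frac{h_{k,x_0}r_0^{-\alpha}}{WN_0+\sum_{x\in\Phi\setminus\{x_0\}}h_{k,x}|x|^{-\alpha}\mathbf{1}(x\in\Phi_k)}$; a slot is successful if $x_0$ is active and $\mathrm{SINR}_k>\theta$; the local delay is the number of slots until the first success and $\widetilde{D}(p)$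 is its mean. (It equals $\widetilde{D}(p)=\frac1p\exp\left(\frac{p\lambda c_d r_0^d\theta^\delta C(\delta)}{(1-p)^{1-\delta}}+\theta r_0^\alpha WN_0\right)$.) *)

theory Defs
  imports "HOL-Analysis.Analysis"
begin

definition C_delta :: "real \<Rightarrow> real" where
  "C_delta \<delta> = Gamma (1 + \<delta>) * Gamma (1 - \<delta>)"

text \<open>Mean local delay of ALOHA with transmit probability p, in the closed form
  stated in the model (d = dimension, alpha = path-loss exponent, delta = d/alpha,
  c_d = volume of the unit ball in R^d).\<close>
definition mean_local_delay ::
  "nat \<Rightarrow> real \<Rightarrow> real \<Rightarrow> real \<Rightarrow> real \<Rightarrow> real \<Rightarrow> real \<Rightarrow> real \<Rightarrow> real" where
  "mean_local_delay d \<alpha> lam r0 \<theta> W N0 p =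
     (let \<delta> = real d / \<alpha> in
      (1 / p) * exp (p * lam * unit_ball_vol (real d) * r0 ^ d * \<theta> powr \<delta> * C_delta \<delta>
                       / (1 - p) powr (1 - \<delta>)
                     + \<theta> * r0 powr \<alpha> * W * N0))"

end

theory Submission
  imports Defs
begin

text \<open>
  Write the mean local delay as \<open>exp (A p / (1 - p) powr (1 - \<delta>) + B) / p\<close>.
  At an interior minimiser the derivative vanishes, which gives the stationarity equation
  \<open>A p (1 - \<delta> p) = (1 - p) powr (2 - \<delta>)\<close>. Since \<open>0 < 1 - p < 1\<close> and
  \<open>1 < 2 - \<delta> < 2\<close>, its right-hand side lies strictly between \<open>(1 - p)\<^sup>2\<close> and
  \<open>1 - p\<close>; comparing with the left-hand side yields \<open>A p < 1\<close> and \<open>(A + 2) p > 1\<close>.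
\<close>

definition aloha_delay :: "real \<Rightarrow> real \<Rightarrow> real \<Rightarrow> real \<Rightarrow> real" where
  "aloha_delay A \<delta> B p = exp (A * p / (1 - p) powr (1 - \<delta>) + B) / p"

lemma aloha_delay_has_derivative:
  fixes A \<delta> B p :: real
  assumes "0 < p" "p < 1"
  shows "(aloha_delay A \<delta> B has_real_derivative
           aloha_delay A \<delta> B p / p * (A * p * (1 - \<delta> * p) / (1 - p) powr (2 - \<delta>) - 1)) (at p)"
proof -
  define s where "s = (1 - p) powr (1 - \<delta>)"
  have "s > 0" using assms by (simp add: s_def)
  have power_succ: "(1 - p) powr (2 - \<delta>) = (1 - p) * s"
    and power_pred: "(1 - p) powr (- \<delta>) = s / (1 - p)"
    using assms by (simp_all add: s_def powr_diff powr_minus_divide power2_eq_square)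
  show ?thesis
    unfolding aloha_delay_def[abs_def]
    using assms \<open>s > 0\<close>
    by (auto intro!: derivative_eq_intros simp: power_succ power_pred s_def[symmetric])
      (simp add: field_simps)
qed

lemma aloha_delay_minimiser_stationary:
  fixes A \<delta> B p :: real
  assumes "0 < p" "p < 1"
    and min: "\<forall>y\<in>{0<..<1}. aloha_delay A \<delta> B p \<le> aloha_delay A \<delta> B y"
  shows "A * p * (1 - \<delta> * p) = (1 - p) powr (2 - \<delta>)"
proof -
  have local_min:
    "\<forall>y. \<bar>p - y\<bar> < min p (1 - p) \<longrightarrow> aloha_delay A \<delta> B p \<le> aloha_delay A \<delta> B y"
  proof (intro allI impI)
    fix y
    assume "\<bar>p - y\<bar> < min p (1 - p)"
    then have "y \<in> {0<..<1}"
      by auto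
    then show "aloha_delay A \<delta> B p \<le> aloha_delay A \<delta> B y"
      using min by blast
  qed
  have "aloha_delay A \<delta> B p / p * (A * p * (1 - \<delta> * p) / (1 - p) powr (2 - \<delta>) - 1) = 0"
    using assms by (intro DERIV_local_min[OF aloha_delay_has_derivative _ local_min]) auto
  moreover have "aloha_delay A \<delta> B p / p > 0"
    using assms by (simp add: aloha_delay_def)
  ultimately have "A * p * (1 - \<delta> * p) / (1 - p) powr (2 - \<delta>) - 1 = 0"
    by (metis less_irrefl mult_eq_0_iff)
  moreover have "(1 - p) powr (2 - \<delta>) > 0"
    using assms by simp
  ultimately show ?thesis
    by (simp add: divide_eq_eq)
qed

lemma stationary_point_upper_bound:
  fixes A \<delta> p :: real
  assumes "\<delta> < 1" "0 < p" "p < 1"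
    and stationary: "A * p * (1 - \<delta> * p) = (1 - p) powr (2 - \<delta>)"
  shows "A * p < 1"
proof -
  have "\<delta> * p \<le> p"
    using assms mult_right_mono[of \<delta> 1 p] by simp
  have "A * p * (1 - \<delta> * p) < 1 - p"
    using stationary powr_less_mono'[of "1 - p" 1 "2 - \<delta>"] assms by simp
  also have "\<dots> \<le> 1 * (1 - \<delta> * p)"
    using \<open>\<delta> * p \<le> p\<close> by simp
  finally have "A * p * (1 - \<delta> * p) < 1 * (1 - \<delta> * p)" .
  moreover have "0 < 1 - \<delta> * p"
    using \<open>\<delta> * p \<le> p\<close> assms by linarith
  ultimately show ?thesis
    using mult_less_cancel_right_pos by blast
qed

lemma stationary_point_lower_bound:
  fixes A \<delta> p :: real
  assumes "0 \<le> \<delta>" "\<delta> < 1" "0 < p" "p < 1"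
    and stationary: "A * p * (1 - \<delta> * p) = (1 - p) powr (2 - \<delta>)"
  shows "(A + 2) * p > 1"
proof (rule ccontr)
  assume "\<not> (A + 2) * p > 1"
  then have "A * p \<le> 1 - 2 * p"
    by (simp add: algebra_simps)
  moreover have "0 < 1 - \<delta> * p"
    using assms by (smt (verit) mult_left_le_one_le)
  ultimately have "(1 - p) powr (2 - \<delta>) \<le> (1 - 2 * p) * (1 - \<delta> * p)"
    using stationary by (metis mult_right_mono less_le)
  \<comment> \<open>\<open>(1 - p)\<^sup>2 - (1 - 2 p)(1 - \<delta> p) = p ((1 - \<delta>) p + \<delta> (1 - p))\<close>\<close>
  also have "\<dots> < (1 - p) ^ 2"
  proof -
    have "0 < p * ((1 - \<delta>) * p + \<delta> * (1 - p))"
      using assms by (intro mult_pos_pos add_pos_nonneg) auto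
    then show ?thesis
      by (simp add: algebra_simps power2_eq_square)
  qed
  also have "\<dots> \<le> (1 - p) powr (2 - \<delta>)"
    using powr_mono'[of "2 - \<delta>" 2 "1 - p"] assms by (simp add: powr_realpow)
  finally show False
    by simp
qed

theorem theorem6:
  fixes d :: nat and \<alpha> lam r0 \<theta> W N0 p_opt :: real
  assumes "d \<ge> 1" and "\<alpha> > real d" and "lam > 0" and "r0 > 0" and "\<theta> > 0"
    and "W > 0" and "N0 \<ge> 0"
    and "p_opt \<in> {0<..<1}"
    and "\<forall>p\<in>{0<..<1}. mean_local_delay d \<alpha> lam r0 \<theta> W N0 p_opt
                       \<le> mean_local_delay d \<alpha> lam r0 \<theta> W N0 p"
  shows "p_opt \<in> {1 / (lam * unit_ball_vol (real d) * r0 ^ d * \<theta> powr (real d / \<alpha>)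
                        * C_delta (real d / \<alpha>) + 2)
                 <..< 1 / (lam * unit_ball_vol (real d) * r0 ^ d * \<theta> powr (real d / \<alpha>)
                        * C_delta (real d / \<alpha>))}"
proof -
  define \<delta> where "\<delta> = real d / \<alpha>"
  define A where "A = lam * unit_ball_vol (real d) * r0 ^ d * \<theta> powr \<delta> * C_delta \<delta>"
  define B where "B = \<theta> * r0 powr \<alpha> * W * N0"
  have "0 < \<delta>" "\<delta> < 1"
    using assms(1,2) by (simp_all add: \<delta>_def)
  then have "A > 0"
    using assms(3-5) by (simp add: A_def C_delta_def)
  have "mean_local_delay d \<alpha> lam r0 \<theta> W N0 p = aloha_delay A \<delta> B p" for p
    by (simp add: mean_local_delay_def Let_def aloha_delay_def A_def B_def \<delta>_def ac_simps)
  then have "A * p_opt * (1 - \<delta> * p_opt) = (1 - p_opt) powr (2 - \<delta>)"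
    using assms(8,9) by (intro aloha_delay_minimiser_stationary) auto
  then have "A * p_opt < 1" "(A + 2) * p_opt > 1"
    using \<open>0 < \<delta>\<close> \<open>\<delta> < 1\<close> assms(8)
    by (auto intro: stationary_point_upper_bound stationary_point_lower_bound less_imp_le)
  then show ?thesis
    using \<open>A > 0\<close> by (simp add: field_simps A_def \<delta>_def)
qed

end
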